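(* Let $G=(V,E)$ be a finite simple graph which is $S_{1,1,5}$-free. Let $xy\in E$ and for $i\ge 1$ let $N_i=\{z\in V:\operatorname{dist}_G(z,\{x,y\})=i\}$. Assume $N_2=\{u_1,\dots,u_k\}$ is an independent set, and for each $i$ let $T_i$ be the set of vertices $t\in N_3$ whose only neighbor in $N_2$ is $u_i$. Then there is no induced path $(t_1,t_2,t_3,t_4,t_5)$ in $G[N_3]$ with $t_j\in T_{i_j}$ for five pairwise distinct indices $i_1,\dots,i_5$.
   Context: $S_{1,1,5}$ is the tree with a center $u$ adjacent to $a$, $b$ and $z_1$, where $u,z_1,\dots,z_5$ is an induced path, and no other edges. $\operatorname{dist}_G(z,\{x,y\})$ is the minimum of the distances from $z$ to $x$ and to $y$. *)

theory Defs
  imports Main "HOL-Library.Extended_Nat"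
begin

definition simple_graph :: "'a set \<Rightarrow> ('a \<Rightarrow> 'a \<Rightarrow> bool) \<Rightarrow> bool" where
  "simple_graph V E \<longleftrightarrow> finite V \<and> (\<forall>a b. E a b \<longrightarrow> E b a) \<and> (\<forall>a. \<not> E a a)
     \<and> (\<forall>a b. E a b \<longrightarrow> a \<in> V \<and> b \<in> V)"

definition walk :: "'a set \<Rightarrow> ('a \<Rightarrow> 'a \<Rightarrow> bool) \<Rightarrow> 'a list \<Rightarrow> bool" where
  "walk V E xs \<longleftrightarrow> xs \<noteq> [] \<and> set xs \<subseteq> V \<and> (\<forall>i. Suc i < length xs \<longrightarrow> E (xs ! i) (xs ! Suc i))"

definition gdist :: "'a set \<Rightarrow> ('a \<Rightarrow> 'a \<Rightarrow> bool) \<Rightarrow> 'a \<Rightarrow> 'a \<Rightarrow> enat" where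
  "gdist V E a b = (INF xs \<in> {xs. walk V E xs \<and> hd xs = a \<and> last xs = b}. enat (length xs - 1))"

definition dist_set2 :: "'a set \<Rightarrow> ('a \<Rightarrow> 'a \<Rightarrow> bool) \<Rightarrow> 'a \<Rightarrow> 'a \<Rightarrow> 'a \<Rightarrow> enat" where
  "dist_set2 V E z x y = min (gdist V E z x) (gdist V E z y)"

definition layer :: "'a set \<Rightarrow> ('a \<Rightarrow> 'a \<Rightarrow> bool) \<Rightarrow> 'a \<Rightarrow> 'a \<Rightarrow> nat \<Rightarrow> 'a set" where
  "layer V E x y i = {z \<in> V. dist_set2 V E z x y = enat i}"

definition independent_set :: "('a \<Rightarrow> 'a \<Rightarrow> bool) \<Rightarrow> 'a set \<Rightarrow> bool" where
  "independent_set E S \<longleftrightarrow> (\<forall>a\<in>S. \<forall>b\<in>S. \<not> E a b)"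

text \<open>S_{1,1,5}: centre u adjacent to a, b, z1; u,z1,...,z5 an induced path; no other edges.\<close>
definition S115_edges :: "(nat \<times> nat) set" where
  "S115_edges = {(0,1),(0,2),(0,3),(3,4),(4,5),(5,6),(6,7)}"

definition S115_free :: "'a set \<Rightarrow> ('a \<Rightarrow> 'a \<Rightarrow> bool) \<Rightarrow> bool" where
  "S115_free V E \<longleftrightarrow> \<not> (\<exists>f :: nat \<Rightarrow> 'a. inj_on f {0..<8} \<and> f ` {0..<8} \<subseteq> V \<and>
     (\<forall>i<8. \<forall>j<8. E (f i) (f j) \<longleftrightarrow> ((i,j) \<in> S115_edges \<or> (j,i) \<in> S115_edges)))"

definition induced_path :: "('a \<Rightarrow> 'a \<Rightarrow> bool) \<Rightarrow> 'a list \<Rightarrow> bool" where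
  "induced_path E ts \<longleftrightarrow> distinct ts \<and>
     (\<forall>i<length ts. \<forall>j<length ts. E (ts ! i) (ts ! j) \<longleftrightarrow> (i = Suc j \<or> j = Suc i))"

end

theory Submission
  imports Defs
begin

(* Let t_0 ... t_4 be the path and s_j the unique neighbour of t_j in N_2; the s_j are distinct
   and pairwise non-adjacent. Pick a neighbour w of s_0 in N_1 and a neighbour r of w in N_0.
   Since an edge changes the distance to {x, y} by at most one, all adjacencies between these
   vertices are determined except those of w with s_2 and s_4, and according to them one of
     r w s_4 t_4 t_3 t_2 t_1,   r w s_2 t_2 t_3 t_4 s_4,   t_3 t_2 t_1 t_0 s_0 w r
   is an induced path with a further vertex (s_0, s_0, s_2 respectively) adjacent to its second
   vertex only: an induced S_{1,1,5}. *)

lemma walk_Cons: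
  assumes "ws \<noteq> []"
  shows "walk V E (a # ws) \<longleftrightarrow> a \<in> V \<and> E a (hd ws) \<and> walk V E ws"
  using assms unfolding walk_def
  by (auto simp: hd_conv_nth nth_Cons' less_Suc_eq_0_disj) (metis Suc_pred)

lemma gdist_le_walk:
  assumes "walk V E ws" "hd ws = a" "last ws = b"
  shows "gdist V E a b \<le> enat (length ws - 1)"
  unfolding gdist_def using assms by (intro INF_lower) auto

lemma gdist_attained:
  assumes "gdist V E a b \<noteq> \<infinity>"
  obtains ws where "walk V E ws" "hd ws = a" "last ws = b" "gdist V E a b = enat (length ws - 1)"
proof -
  let ?L = "(\<lambda>ws. enat (length ws - 1)) ` {ws. walk V E ws \<and> hd ws = a \<and> last ws = b}"
  have "?L \<noteq> {}"
    using assms unfolding gdist_def by (metis Inf_empty top_enat_def)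
  then have "Inf ?L \<in> ?L"
    unfolding Inf_enat_def by (auto intro: LeastI)
  then show thesis
    using that unfolding gdist_def by auto
qed

lemma gdist_le_adjacent:
  assumes G: "simple_graph V E" and "E a c"
  shows "gdist V E a b \<le> gdist V E c b + 1"
proof (cases "gdist V E c b = \<infinity>")
  case False
  then obtain ws where ws: "walk V E ws" "hd ws = c" "last ws = b"
    and len: "gdist V E c b = enat (length ws - 1)"
    by (rule gdist_attained)
  have "ws \<noteq> []" using ws(1) unfolding walk_def by simp
  moreover have "a \<in> V" using G \<open>E a c\<close> unfolding simple_graph_def by blast
  ultimately have "walk V E (a # ws)"
    using ws \<open>E a c\<close> by (simp add: walk_Cons)
  then have "gdist V E a b \<le> enat (length (a # ws) - 1)"
    by (rule gdist_le_walk) (use ws \<open>ws \<noteq> []\<close> in auto)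
  with len \<open>ws \<noteq> []\<close> show ?thesis by (simp add: one_enat_def)
qed simp

lemma dist_set2_le_adjacent:
  assumes "simple_graph V E" and "E a c"
  shows "dist_set2 V E a x y \<le> dist_set2 V E c x y + 1"
  using gdist_le_adjacent[OF assms, of x] gdist_le_adjacent[OF assms, of y]
  unfolding dist_set2_def by (auto simp: min_def add_right_mono intro: order_trans)

lemma layer_step_down:
  assumes G: "simple_graph V E" and z: "z \<in> layer V E x y (Suc i)"
  obtains z' where "E z z'" "z' \<in> layer V E x y i"
proof -
  have dz: "dist_set2 V E z x y = enat (Suc i)" using z unfolding layer_def by simp
  then obtain v where v: "v = x \<or> v = y" "gdist V E z v = enat (Suc i)"
    unfolding dist_set2_def by (metis min_def)
  then obtain ws where ws: "walk V E ws" "hd ws = z" "last ws = v" "length ws - 1 = Suc i"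
    by (metis enat.distinct(2) enat.inject gdist_attained)
  then obtain z' rest where ws_eq: "ws = z # z' # rest"
    by (cases ws; cases "tl ws") auto
  have "E z z'" and walk': "walk V E (z' # rest)"
    using ws(1) unfolding ws_eq by (simp_all add: walk_Cons)
  then have "z' \<in> V" unfolding walk_def by simp
  have "dist_set2 V E z' x y \<le> gdist V E z' v"
    using v(1) unfolding dist_set2_def by auto
  also have "\<dots> \<le> enat i"
    using gdist_le_walk[OF walk'] ws unfolding ws_eq by (simp add: last_ConsR)
  finally have "dist_set2 V E z' x y \<le> enat i" .
  moreover have "enat (Suc i) \<le> dist_set2 V E z' x y + 1"
    using dist_set2_le_adjacent[OF G \<open>E z z'\<close>, of x y] dz by simp
  ultimately have "dist_set2 V E z' x y = enat i"
    by (cases "dist_set2 V E z' x y") (auto simp: one_enat_def)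
  with \<open>E z z'\<close> \<open>z' \<in> V\<close> show thesis
    using that unfolding layer_def by blast
qed

lemma induced_path_Nil [simp]: "induced_path E []"
  by (simp add: induced_path_def)

lemma induced_path_Cons:
  assumes "simple_graph V E"
  shows "induced_path E (v # ts) \<longleftrightarrow>
    induced_path E ts \<and> v \<notin> set ts \<and> (\<forall>q\<in>set ts. E v q \<longleftrightarrow> q = hd ts)"
proof -
  have sym: "E p q \<longleftrightarrow> E q p" and irrefl: "\<not> E p p" for p q
    using assms unfolding simple_graph_def by auto
  have "(\<forall>q\<in>set ts. E v q \<longleftrightarrow> q = hd ts) \<longleftrightarrow> (\<forall>j<length ts. E v (ts ! j) \<longleftrightarrow> j = 0)"
    if "distinct ts"
  proof (cases ts)
    case (Cons t ts')
    then have "ts ! j = hd ts \<longleftrightarrow> j = 0" if "j < length ts" for j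
      using nth_eq_iff_index_eq[OF \<open>distinct ts\<close> that, of 0] Cons by (simp add: hd_conv_nth)
    then show ?thesis by (auto simp: all_set_conv_all_nth)
  qed simp
  then show ?thesis
    unfolding induced_path_def
    by (auto simp: All_less_Suc2 nth_Cons' sym irrefl split: if_splits)
qed

lemma not_S115_free_if_pendant:
  assumes G: "simple_graph V E" and P: "induced_path E P" "length P = 7"
    and b: "b \<notin> set P" "\<forall>v\<in>set P. E b v \<longleftrightarrow> v = P ! 1"
  shows "\<not> S115_free V E"
proof -
  from P(2) obtain a c z1 z2 z3 z4 z5 where P_eq: "P = [a, c, z1, z2, z3, z4, z5]"
    by (auto simp: numeral_eq_Suc length_Suc_conv)
  have sym: "E p q \<longleftrightarrow> E q p" and inV: "E p q \<Longrightarrow> p \<in> V \<and> q \<in> V"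
    and irrefl: "\<not> E p p" for p q
    using G unfolding simple_graph_def by auto
  define f where "f = (!) [c, a, b, z1, z2, z3, z4, z5]"
  have path: "distinct [a, c, z1, z2, z3, z4, z5]"
    "E a c" "E c z1" "E z1 z2" "E z2 z3" "E z3 z4" "E z4 z5"
    "\<not> E a z1" "\<not> E a z2" "\<not> E a z3" "\<not> E a z4" "\<not> E a z5"
    "\<not> E c z2" "\<not> E c z3" "\<not> E c z4" "\<not> E c z5"
    "\<not> E z1 z3" "\<not> E z1 z4" "\<not> E z1 z5" "\<not> E z2 z4" "\<not> E z2 z5" "\<not> E z3 z5"
    using P(1) unfolding P_eq by (auto simp: induced_path_Cons[OF G])
  have pendant: "E b c" "\<not> E b a" "\<not> E b z1" "\<not> E b z2" "\<not> E b z3" "\<not> E b z4" "\<not> E b z5"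
    using b path(1) unfolding P_eq by auto
  have "inj_on f {0..<8}"
    unfolding f_def using path(1) b(1) by (intro inj_on_nth) (auto simp: P_eq)
  moreover have "f ` {0..<8} \<subseteq> V"
  proof -
    have "f ` {0..<8} = set [c, a, b, z1, z2, z3, z4, z5]"
      unfolding f_def by (auto simp: set_conv_nth)
    also have "\<dots> \<subseteq> V"
      using inV[OF path(2)] inV[OF path(4)] inV[OF path(6)] inV[OF path(7)] b(2)
      by (auto simp: P_eq dest: inV)
    finally show ?thesis .
  qed
  moreover have "\<forall>i<8. \<forall>j<8. E (f i) (f j) \<longleftrightarrow> ((i,j) \<in> S115_edges \<or> (j,i) \<in> S115_edges)"
    using path(2-) pendant irrefl
    by (simp add: f_def S115_edges_def numeral_eq_Suc All_less_Suc2 sym)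
  ultimately show ?thesis unfolding S115_free_def by blast
qed

lemma private_neighbours_not_S115_free:
  fixes t s :: "nat \<Rightarrow> 'a"
  assumes G: "simple_graph V E"
    and t_path: "\<forall>i<5. \<forall>j<5. E (t i) (t j) \<longleftrightarrow> i = Suc j \<or> j = Suc i"
    and t_inj: "\<forall>i<5. \<forall>j<5. t i = t j \<longleftrightarrow> i = j"
    and t_s_adj: "\<forall>i<5. \<forall>j<5. E (t i) (s j) \<longleftrightarrow> i = j"
    and s_inj: "\<forall>i<5. \<forall>j<5. s i = s j \<longleftrightarrow> i = j"
    and s_indep: "\<forall>i<5. \<forall>j<5. \<not> E (s i) (s j)"
    and t_layer: "\<forall>i<5. t i \<in> layer V E x y 3"
    and s_layer: "\<forall>i<5. s i \<in> layer V E x y 2"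
  shows "\<not> S115_free V E"
proof -
  let ?d = "\<lambda>p. dist_set2 V E p x y"
  have sym: "E p q \<longleftrightarrow> E q p" for p q
    using G unfolding simple_graph_def by auto
  have flip: "E q p" if "E p q" for p q
    using that sym by blast
  have flip_neg: "\<not> E q p" if "\<not> E p q" for p q
    using that sym by blast
  have far: "\<not> E p q" "\<not> E q p" if "?d q + 1 < ?d p" for p q
    using that dist_set2_le_adjacent[OF G, of p q x y] sym by (auto simp: not_le[symmetric])
  have apart: "p \<noteq> q" if "?d p \<noteq> ?d q" for p q
    using that by blast
  have s_t_adj: "\<forall>i<5. \<forall>j<5. E (s j) (t i) \<longleftrightarrow> i = j"
    using t_s_adj sym by blast
  obtain w where w: "E (s 0) w" "w \<in> layer V E x y 1"
    using layer_step_down[OF G, of "s 0" x y 1] s_layer by (auto simp: numeral_2_eq_2)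
  obtain r where r: "E w r" "r \<in> layer V E x y 0"
    using layer_step_down[OF G, of w x y 0] w(2) by auto
  have d: "i < 5 \<Longrightarrow> ?d (t i) = 3" "i < 5 \<Longrightarrow> ?d (s i) = 2" "?d w = 1" "?d r = 0" for i
    using t_layer s_layer w(2) r(2) by (auto simp: layer_def zero_enat_def one_enat_def enat_numeral)
  note facts = d far apart t_path t_inj t_s_adj s_t_adj s_inj s_indep w(1) r(1)
    flip[OF w(1)] flip[OF r(1)]
  show ?thesis
  proof (cases "E w (s 4)")
    case True
    show ?thesis
      by (rule not_S115_free_if_pendant[OF G, of "[r, w, s 4, t 4, t 3, t 2, t 1]" "s 0"])
        (simp_all add: induced_path_Cons[OF G] facts True)
  next
    case False
    show ?thesis
    proof (cases "E w (s 2)")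
      case True
      show ?thesis
        by (rule not_S115_free_if_pendant[OF G, of "[r, w, s 2, t 2, t 3, t 4, s 4]" "s 0"])
          (simp_all add: induced_path_Cons[OF G] facts True False flip_neg[OF False])
    next
      case False
      show ?thesis
        by (rule not_S115_free_if_pendant[OF G, of "[t 3, t 2, t 1, t 0, s 0, w, r]" "s 2"])
          (simp_all add: induced_path_Cons[OF G] facts flip_neg[OF False])
    qed
  qed
qed

theorem lemma12:
  fixes V :: "'a set" and E :: "'a \<Rightarrow> 'a \<Rightarrow> bool" and x y :: 'a
    and k :: nat and u :: "nat \<Rightarrow> 'a" and T :: "nat \<Rightarrow> 'a set"
  assumes G: "simple_graph V E"
    and free: "S115_free V E"
    and xy: "E x y"
    and N2: "bij_betw u {1..k} (layer V E x y 2)"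
    and indep: "independent_set E (layer V E x y 2)"
    and T_def: "\<And>i. T i = {t \<in> layer V E x y 3. {w \<in> layer V E x y 2. E t w} = {u i}}"
  shows "\<not> (\<exists>ts :: 'a list. \<exists>idx :: nat \<Rightarrow> nat.
            length ts = 5 \<and> set ts \<subseteq> layer V E x y 3 \<and> induced_path E ts \<and>
            inj_on idx {0..<5} \<and> (\<forall>j<5. idx j \<in> {1..k} \<and> ts ! j \<in> T (idx j)))"
proof (intro notI, elim exE conjE)
  fix ts and idx :: "nat \<Rightarrow> nat"
  assume len: "length ts = 5" and ts_layer: "set ts \<subseteq> layer V E x y 3"
    and path: "induced_path E ts" and idx_inj: "inj_on idx {0..<5}"
    and idx: "\<forall>j<5. idx j \<in> {1..k} \<and> ts ! j \<in> T (idx j)"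
  let ?s = "\<lambda>j. u (idx j)"
  have unique: "\<forall>j<5. {w \<in> layer V E x y 2. E (ts ! j) w} = {?s j}"
    using idx T_def by blast
  then have s_layer: "\<forall>j<5. ?s j \<in> layer V E x y 2" by blast
  have s_inj: "\<forall>i<5. \<forall>j<5. ?s i = ?s j \<longleftrightarrow> i = j"
    using idx idx_inj bij_betw_imp_inj_on[OF N2] unfolding inj_on_def
    by (metis atLeastLessThan_iff zero_le)
  have "\<not> S115_free V E"
  proof (rule private_neighbours_not_S115_free[OF G, where t = "(!) ts" and s = ?s])
    show "\<forall>i<5. \<forall>j<5. E (ts ! i) (ts ! j) \<longleftrightarrow> i = Suc j \<or> j = Suc i"
      and "\<forall>i<5. \<forall>j<5. ts ! i = ts ! j \<longleftrightarrow> i = j"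
      using path len by (auto simp: induced_path_def nth_eq_iff_index_eq)
    show "\<forall>i<5. \<forall>j<5. E (ts ! i) (?s j) \<longleftrightarrow> i = j"
      using unique s_layer s_inj by blast
    show "\<forall>i<5. \<forall>j<5. \<not> E (?s i) (?s j)"
      using indep s_layer unfolding independent_set_def by blast
    show "\<forall>i<5. ts ! i \<in> layer V E x y 3"
      using ts_layer len by auto
  qed (use s_inj s_layer in auto)
  with free show False by simp
qed

end
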